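(* Let $n\ge 2$, let $P=[p_1,\ldots,p_n]\neq[n,n-1,\ldots,1]$ be an arithmetically progressed permutation with ratio $k$, and let $\mathsf{T}_P$ be its associated ternary string (so that $\mathsf{SA}_{\mathsf{T}_P}=P$). Let $t\in[1..n]$ be the index with $p_t=(p_1-1-k)\bmod n$. Then for every $i\in[1..n]$, $\mathsf{BWT}_{\mathsf{T}_P}[i]=\mathsf{T}_P[P[(i+t)\bmod n]]$; that is, $\mathsf{BWT}_{\mathsf{T}_P}$ is the $t$-th cyclic rotation of the string $\mathsf{T}_P[p_1]\mathsf{T}_P[p_2]\cdots\mathsf{T}_P[p_n]$.
   Context: Alphabet $\{\mathtt{a}<\mathtt{b}<\mathtt{c}\}$, lexicographic order with a proper prefix smaller than the longer string; suffix array $\mathsf{SA}_{\mathsf{T}}$: permutation of $[1..n]$ such that $\mathsf{T}[\mathsf{SA}_{\mathsf{T}}[i]..n]$ is the $i$-th smallest suffix. $x\bmod n$ denotes the representative of $x$ modulo $n$ in $[1..n]$. An arithmetically progressed permutation of length $n$ with ratio $k\in[1..n-1]$ is a permutation $P=[p_1,\ldots,p_n]$ of $[1..n]$ with $p_{i+1}=p_i+k\bmod n$. Ternary string associated with $P$: cut $P$ immediately after the entry $n-k$ and immediately after the entry $(p_1-k-1)\bmod n$, giving consecutive possibly empty blocks $A,B,C$ with $P=ABC$; set $\mathsf{T}_P[p_i]=\mathtt{a},\mathtt{b},\mathtt{c}$ according as $p_i$ lies in $A$, $B$, $C$. BWT: $\mathsf{BWT}_{\mathsf{T}}[i]=\mathsf{T}[\mathsf{SA}_{\mathsf{T}}[i]-1\bmod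 n]$. *)

theory Defs
  imports Main
begin

datatype tern = ta | tb | tc

definition tern_less :: "(tern \<times> tern) set" where
  "tern_less = {(ta,tb),(ta,tc),(tb,tc)}"

text \<open>Strict lexicographic order on strings; a proper prefix is smaller.\<close>
definition str_less :: "tern list \<Rightarrow> tern list \<Rightarrow> bool" where
  "str_less xs ys \<longleftrightarrow> (xs, ys) \<in> lexord tern_less"

text \<open>x mod n, representative in [1..n].\<close>
definition modn :: "int \<Rightarrow> nat \<Rightarrow> nat" where
  "modn x n = nat ((x - 1) mod int n + 1)"

definition nth1 :: "'a list \<Rightarrow> nat \<Rightarrow> 'a" where
  "nth1 xs i = xs ! (i - 1)"

definition pos1 :: "nat list \<Rightarrow> nat \<Rightarrow> nat" where
  "pos1 P v = Suc (LEAST i. i < length P \<and> P ! i = v)"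

definition ap_perm :: "nat \<Rightarrow> nat \<Rightarrow> nat list \<Rightarrow> bool" where
  "ap_perm n k P \<longleftrightarrow> length P = n \<and> distinct P \<and> set P = {1..n} \<and>
     1 \<le> k \<and> k \<le> n - 1 \<and>
     (\<forall>i. 1 \<le> i \<and> i < n \<longrightarrow> nth1 P (i + 1) = modn (int (nth1 P i) + int k) n)"

text \<open>Ternary string associated with P: cut P right after the entry n-k and right
  after the entry (p1-k-1) mod n, obtaining consecutive blocks A,B,C (P = ABC).\<close>
definition tern_string :: "nat \<Rightarrow> nat \<Rightarrow> nat list \<Rightarrow> tern list" where
  "tern_string n k P =
     (let c1 = pos1 P (n - k);
          c2 = pos1 P (modn (int (nth1 P 1) - int k - 1) n)
      in map (\<lambda>v. let q = pos1 P v in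
                  if q \<le> min c1 c2 then ta else if q \<le> max c1 c2 then tb else tc)
             [1..<n+1])"

definition suffix1 :: "tern list \<Rightarrow> nat \<Rightarrow> tern list" where
  "suffix1 T j = drop (j - 1) T"

definition is_suffix_array :: "tern list \<Rightarrow> nat list \<Rightarrow> bool" where
  "is_suffix_array T SA \<longleftrightarrow> length SA = length T \<and> distinct SA \<and> set SA = {1..length T} \<and>
     (\<forall>i. 1 \<le> i \<and> i < length T \<longrightarrow>
        str_less (suffix1 T (nth1 SA i)) (suffix1 T (nth1 SA (i + 1))))"

definition suffix_array :: "tern list \<Rightarrow> nat list" where
  "suffix_array T = (THE SA. is_suffix_array T SA)"

definition bwt :: "tern list \<Rightarrow> nat \<Rightarrow> tern" where
  "bwt T i = nth1 T (modn (int (nth1 (suffix_array T) i) - 1) (length T))"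

end

theory Submission
  imports Defs "HOL-Number_Theory.Cong"
begin

text \<open>
  Since \<open>p\<^sub>j = p\<^sub>1 + (j - 1) k mod n\<close>, the entry following
  \<open>v \<noteq> p\<^sub>n\<close> in \<open>P\<close> is \<open>w = v + k mod n\<close>, and \<open>T[w] = T[v]\<close> unless \<open>v\<close> is one of the two
  cut entries \<open>n - k\<close>, \<open>(p\<^sub>1 - k - 1) mod n\<close>, where the letter increases. Compare the
  suffixes at \<open>v\<close> and \<open>w\<close> letter by letter: shifting both starts by one keeps
  \<open>w = v + k mod n\<close>, and the shifted pair stays admissible unless \<open>v\<close> is a cut entry, because
  \<open>w = n\<close> forces \<open>v = n - k\<close> and \<open>v + 1 = p\<^sub>n = p\<^sub>1 - k mod n\<close> forces \<open>v = (p\<^sub>1 - k - 1) mod n\<close>.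
  So either a strictly increasing pair of letters is met, or the suffix at \<open>v\<close> is a proper
  prefix of the one at \<open>w\<close>; either way consecutive entries of \<open>P\<close> give increasing suffixes,
  i.e. \<open>P\<close> is the suffix array of \<open>T\<close>. For the BWT, \<open>p\<^sub>t = p\<^sub>1 - 1 - k\<close> means
  \<open>(t - 1) k = -1 - k mod n\<close>, hence \<open>p\<^sub>i\<^sub>+\<^sub>t = p\<^sub>i - 1 mod n\<close>.
\<close>

lemma int_modn: "0 < n \<Longrightarrow> int (modn x n) = (x - 1) mod int n + 1"
  unfolding modn_def by simp

lemma modn_bounds:
  assumes "0 < n"
  shows "modn x n \<in> {1..n}"
proof -
  have "0 \<le> (x - 1) mod int n" "(x - 1) mod int n < int n" using assms by simp_all
  then have "1 \<le> int (modn x n)" "int (modn x n) \<le> int n"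
    using int_modn[OF assms, of x] by linarith+
  then show ?thesis by simp
qed

lemma cong_modn: "0 < n \<Longrightarrow> [int (modn x n) = x] (mod int n)"
  unfolding int_modn cong_def by (metis diff_add_cancel mod_add_left_eq)

lemma modn_of_nat: "v \<in> {1..n} \<Longrightarrow> modn (int v) n = v"
  unfolding modn_def by simp

lemma modn_eqI:
  assumes "v \<in> {1..n}" "[int v = x] (mod int n)"
  shows "modn x n = v"
proof -
  have "(x - 1) mod int n = (int v - 1) mod int n"
    using assms(2) unfolding cong_def by (metis mod_diff_cong)
  also have "\<dots> = int v - 1" using assms(1) by (simp add: mod_pos_pos_trivial)
  finally have "int (modn x n) = int v" using assms(1) by (simp add: int_modn)
  then show ?thesis by simp
qed

lemma cong_nat_in_range_eq:
  "v \<in> {1..n} \<Longrightarrow> w \<in> {1..n} \<Longrightarrow> [int v = int w] (mod int n) \<Longrightarrow> v = w"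
  by (metis modn_eqI modn_of_nat)

lemma sorted_wrt_unique:
  assumes "asymp R"
  shows "sorted_wrt R xs \<Longrightarrow> sorted_wrt R ys \<Longrightarrow> set xs = set ys \<Longrightarrow> xs = ys"
proof (induction xs arbitrary: ys)
  case Nil
  then show ?case by simp
next
  case (Cons x xs)
  then obtain y ys' where ys: "ys = y # ys'" by (cases ys) auto
  have "x = y"
  proof (rule ccontr)
    assume "x \<noteq> y"
    then have "R x y" "R y x" using Cons.prems ys by auto
    then show False using assms by (meson asympD)
  qed
  moreover have "x \<notin> set xs" "y \<notin> set ys'"
    using Cons.prems ys assms by (auto dest: asympD)
  ultimately have "set xs = set ys'" using Cons.prems ys by auto
  then show ?case using Cons ys \<open>x = y\<close> by simp
qed

lemma pos1_nth: "distinct xs \<Longrightarrow> j < length xs \<Longrightarrow> pos1 xs (xs ! j) = Suc j"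
  unfolding pos1_def by (auto intro!: Least_equality simp: nth_eq_iff_index_eq)

lemma nth_pos1: "v \<in> set xs \<Longrightarrow> xs ! (pos1 xs v - 1) = v"
proof -
  assume "v \<in> set xs"
  then have "\<exists>i. i < length xs \<and> xs ! i = v" by (simp add: in_set_conv_nth)
  then have "xs ! (LEAST i. i < length xs \<and> xs ! i = v) = v" by (rule LeastI2_ex) simp
  then show ?thesis unfolding pos1_def by simp
qed

lemma str_less_trans: "str_less xs ys \<Longrightarrow> str_less ys zs \<Longrightarrow> str_less xs zs"
proof -
  have "trans tern_less" unfolding tern_less_def trans_def by auto
  then show "str_less xs ys \<Longrightarrow> str_less ys zs \<Longrightarrow> str_less xs zs"
    unfolding str_less_def by (meson lexord_transI transD)
qed

lemma str_less_irrefl: "\<not> str_less xs xs"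
  unfolding str_less_def by (rule lexord_irreflexive) (auto simp: tern_less_def)

lemma str_less_asym: "str_less xs ys \<Longrightarrow> \<not> str_less ys xs"
  using str_less_trans str_less_irrefl by blast

lemma str_less_Cons_iff:
  "str_less (a # xs) (b # ys) \<longleftrightarrow> (a, b) \<in> tern_less \<or> a = b \<and> str_less xs ys"
  unfolding str_less_def by simp

lemma str_less_Nil_Cons: "str_less [] (b # ys)"
  unfolding str_less_def by simp

lemma suffix1_Cons:
  assumes "v \<in> {1..length T}"
  shows "suffix1 T v = T ! (v - 1) # suffix1 T (Suc v)"
proof -
  have "T ! (v - 1) # drop (Suc (v - 1)) T = drop (v - 1) T"
    using assms by (intro Cons_nth_drop_Suc) auto
  then show ?thesis using assms unfolding suffix1_def by simp
qed

lemma suffix_array_eqI: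
  assumes "is_suffix_array T SA"
  shows "suffix_array T = SA"
proof -
  define R where "R a b \<longleftrightarrow> str_less (suffix1 T a) (suffix1 T b)" for a b
  have "transp R" unfolding R_def by (auto intro: transpI str_less_trans)
  have "asymp R" unfolding R_def by (auto intro: asympI dest: str_less_asym)
  have sorted: "sorted_wrt R xs" if "is_suffix_array T xs" for xs
    unfolding sorted_wrt_iff_nth_Suc_transp[OF \<open>transp R\<close>]
  proof (intro allI impI)
    fix i assume "Suc i < length xs"
    then show "R (xs ! i) (xs ! Suc i)"
      using that unfolding is_suffix_array_def R_def nth1_def
      by (metis Suc_eq_plus1 diff_Suc_1 le_add2 plus_1_eq_Suc)
  qed
  show ?thesis
    unfolding suffix_array_def
  proof (rule the_equality)
    fix SA' assume "is_suffix_array T SA'"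
    then show "SA' = SA"
      using sorted_wrt_unique[OF \<open>asymp R\<close> sorted sorted] assms
      by (simp add: is_suffix_array_def)
  qed (fact assms)
qed

definition block_letter :: "nat \<Rightarrow> nat \<Rightarrow> nat \<Rightarrow> tern" where
  "block_letter c1 c2 q = (if q \<le> min c1 c2 then ta else if q \<le> max c1 c2 then tb else tc)"

lemma block_letter_Suc: "q \<noteq> c1 \<Longrightarrow> q \<noteq> c2 \<Longrightarrow> block_letter c1 c2 (Suc q) = block_letter c1 c2 q"
  unfolding block_letter_def by auto

lemma block_letter_Suc_less:
  "q = c1 \<or> q = c2 \<Longrightarrow> (block_letter c1 c2 q, block_letter c1 c2 (Suc q)) \<in> tern_less"
  unfolding block_letter_def tern_less_def by auto

locale ap_permutation =
  fixes n k :: nat and P :: "nat list"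
  assumes two_le_n: "2 \<le> n" and ap_perm: "ap_perm n k P"
begin

lemma length_P: "length P = n" and distinct_P: "distinct P" and set_P: "set P = {1..n}"
  and k_pos: "1 \<le> k" and k_less: "k < n"
  using ap_perm two_le_n unfolding ap_perm_def by auto

lemma n_pos: "0 < n"
  using two_le_n by simp

lemma nth_P_mem: "i < n \<Longrightarrow> P ! i \<in> {1..n}"
  using nth_mem[of i P] length_P set_P by simp

lemma cong_nth_P_Suc:
  assumes "Suc i < n"
  shows "[int (P ! Suc i) = int (P ! i) + int k] (mod int n)"
proof -
  have "nth1 P (Suc i + 1) = modn (int (nth1 P (Suc i)) + int k) n"
    using ap_perm assms unfolding ap_perm_def by simp
  then show ?thesis
    using cong_modn[OF n_pos] unfolding nth1_def by simp
qed

lemma cong_nth_P: "i < n \<Longrightarrow> [int (P ! i) = int (P ! 0) + int i * int k] (mod int n)"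
proof (induction i)
  case 0
  then show ?case by simp
next
  case (Suc i)
  have "[int (P ! Suc i) = int (P ! i) + int k] (mod int n)"
    using Suc.prems by (rule cong_nth_P_Suc)
  also have "[int (P ! i) + int k = int (P ! 0) + int i * int k + int k] (mod int n)"
    using Suc by (simp add: cong_add)
  finally show ?case by (simp add: algebra_simps)
qed

lemma cong_last_P: "[int (P ! (n - 1)) = int (P ! 0) - int k] (mod int n)"
proof -
  have "[int (P ! (n - 1)) = int (P ! 0) + int (n - 1) * int k] (mod int n)"
    by (rule cong_nth_P) (use n_pos in simp)
  also have "int (P ! 0) + int (n - 1) * int k = (int (P ! 0) - int k) + int n * int k"
    using n_pos by (simp add: of_nat_diff algebra_simps)
  also have "[\<dots> = int (P ! 0) - int k] (mod int n)"
    by (simp add: cong_def)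
  finally show ?thesis .
qed

definition cut1 :: nat where "cut1 = n - k"
definition cut2 :: nat where "cut2 = modn (int (P ! 0) - int k - 1) n"
definition T :: "tern list" where "T = tern_string n k P"

lemma T_eq: "T = map (\<lambda>v. block_letter (pos1 P cut1) (pos1 P cut2) (pos1 P v)) [1..<n+1]"
  unfolding T_def tern_string_def block_letter_def cut1_def cut2_def nth1_def
  by (simp add: Let_def algebra_simps)

lemma length_T: "length T = n"
  by (simp add: T_eq)

lemma T_nth_P: "j < n \<Longrightarrow> T ! (P ! j - 1) = block_letter (pos1 P cut1) (pos1 P cut2) (Suc j)"
  using nth_P_mem[of j] pos1_nth[OF distinct_P, of j] length_P
  by (auto simp: T_eq simp del: upt_Suc)

lemma cut1_mem: "cut1 \<in> {1..n}"
  using k_pos k_less unfolding cut1_def by simp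

lemma cut2_mem: "cut2 \<in> {1..n}"
  unfolding cut2_def using modn_bounds[OF n_pos] .

lemma Suc_eq_pos1_iff:
  assumes "j < n" "c \<in> {1..n}"
  shows "Suc j = pos1 P c \<longleftrightarrow> P ! j = c"
proof
  assume "Suc j = pos1 P c"
  then show "P ! j = c" using nth_pos1[of c P] assms set_P by (metis diff_Suc_1)
qed (use pos1_nth[OF distinct_P, of j] assms length_P in simp)

lemma successor_in_P:
  assumes "x \<in> {1..n}" "y \<in> {1..n}" "[int y = int x + int k] (mod int n)" "x \<noteq> P ! (n - 1)"
  obtains j where "Suc j < n" "P ! j = x" "P ! Suc j = y"
proof -
  obtain j where j: "j < n" "P ! j = x"
    using assms(1) set_P length_P by (metis in_set_conv_nth)
  with assms(4) have "Suc j < n" by (cases "Suc j = n") auto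
  then have "[int (P ! Suc j) = int y] (mod int n)"
    using cong_nth_P_Suc assms(3) j(2) by (metis cong_sym cong_trans)
  then have "P ! Suc j = y"
    using cong_nat_in_range_eq nth_P_mem \<open>Suc j < n\<close> assms(2) by blast
  with \<open>Suc j < n\<close> j(2) show thesis by (rule that)
qed

lemma T_successor_eq:
  assumes "x \<in> {1..n}" "y \<in> {1..n}" "[int y = int x + int k] (mod int n)" "x \<noteq> P ! (n - 1)"
    and "x \<noteq> cut1" "x \<noteq> cut2"
  shows "T ! (y - 1) = T ! (x - 1)"
proof -
  obtain j where j: "Suc j < n" "P ! j = x" "P ! Suc j = y"
    using assms(1-4) by (rule successor_in_P)
  then have "Suc j \<noteq> pos1 P cut1" "Suc j \<noteq> pos1 P cut2"
    using assms(5,6) Suc_eq_pos1_iff cut1_mem cut2_mem by auto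
  then show ?thesis
    using T_nth_P[of j] T_nth_P[of "Suc j"] j by (simp add: block_letter_Suc)
qed

lemma T_successor_less:
  assumes "x \<in> {1..n}" "y \<in> {1..n}" "[int y = int x + int k] (mod int n)" "x \<noteq> P ! (n - 1)"
    and "x = cut1 \<or> x = cut2"
  shows "(T ! (x - 1), T ! (y - 1)) \<in> tern_less"
proof -
  obtain j where j: "Suc j < n" "P ! j = x" "P ! Suc j = y"
    using assms(1-4) by (rule successor_in_P)
  then have "Suc j = pos1 P cut1 \<or> Suc j = pos1 P cut2"
    using assms(5) Suc_eq_pos1_iff cut1_mem cut2_mem by auto
  then show ?thesis
    using T_nth_P[of j] T_nth_P[of "Suc j"] j by (simp add: block_letter_Suc_less)
qed

lemma eq_cut1_if_successor_n:
  assumes "v \<in> {1..n}" "[int n = int v + int k] (mod int n)"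
  shows "v = cut1"
proof (rule cong_nat_in_range_eq[OF assms(1) cut1_mem])
  have "[int v = int v + int k - int k] (mod int n)" by simp
  also have "[int v + int k - int k = int n - int k] (mod int n)"
    using cong_diff[OF cong_sym[OF assms(2)] cong_refl] .
  also have "int n - int k = int cut1"
    using k_less unfolding cut1_def by simp
  finally show "[int v = int cut1] (mod int n)" .
qed

lemma eq_cut2_if_Suc_eq_last:
  assumes "v \<in> {1..n}" "Suc v = P ! (n - 1)"
  shows "v = cut2"
proof -
  have "int v = int (P ! (n - 1)) - 1" using assms(2) by simp
  also have "[\<dots> = int (P ! 0) - int k - 1] (mod int n)"
    using cong_last_P by (simp add: cong_diff)
  finally show ?thesis
    unfolding cut2_def using modn_eqI[OF assms(1)] by (simp add: cong_sym)
qed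

lemma str_less_suffix_successor:
  assumes "v \<in> {1..n}" "w \<in> {1..n}" "[int w = int v + int k] (mod int n)" "v \<noteq> P ! (n - 1)"
  shows "str_less (suffix1 T v) (suffix1 T w)"
  using assms
proof (induction "n - v" arbitrary: v w rule: less_induct)
  case less
  have split: "suffix1 T v = T ! (v - 1) # suffix1 T (Suc v)"
    "suffix1 T w = T ! (w - 1) # suffix1 T (Suc w)"
    using less.prems(1,2) length_T by (simp_all add: suffix1_Cons)
  show ?case
  proof (cases "v = cut1 \<or> v = cut2")
    case True
    then show ?thesis
      using T_successor_less[OF less.prems] split by (simp add: str_less_Cons_iff)
  next
    case False
    then have same_letter: "T ! (w - 1) = T ! (v - 1)"
      using T_successor_eq[OF less.prems] by blast
    have "w \<noteq> n"
      using False eq_cut1_if_successor_n less.prems(1,3) by blast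
    have "str_less (suffix1 T (Suc v)) (suffix1 T (Suc w))"
    proof (cases "v = n")
      case True
      then show ?thesis
        using \<open>w \<noteq> n\<close> less.prems(2) length_T suffix1_Cons[of "Suc w" T]
        by (simp add: suffix1_def str_less_Nil_Cons)
    next
      case False
      moreover have "Suc v \<noteq> P ! (n - 1)"
        using eq_cut2_if_Suc_eq_last less.prems(1) \<open>\<not> (v = cut1 \<or> v = cut2)\<close> by blast
      moreover have "[int (Suc w) = int (Suc v) + int k] (mod int n)"
        using cong_add[OF less.prems(3) cong_refl[of 1]] by (simp add: algebra_simps)
      moreover have "n - Suc v < n - v" "Suc v \<in> {1..n}" "Suc w \<in> {1..n}"
        using False less.prems(1,2) \<open>w \<noteq> n\<close> by auto
      ultimately show ?thesis
        using less.hyps by blast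
    qed
    then show ?thesis
      using split same_letter by (simp add: str_less_Cons_iff)
  qed
qed

lemma is_suffix_array_T: "is_suffix_array T P"
  unfolding is_suffix_array_def
proof (intro conjI allI impI)
  fix i assume i: "1 \<le> i \<and> i < length T"
  then have "Suc (i - 1) < n" using length_T by simp
  moreover have "P ! (i - 1) \<noteq> P ! (n - 1)"
    using i length_T distinct_P length_P by (subst nth_eq_iff_index_eq) auto
  ultimately have "str_less (suffix1 T (P ! (i - 1))) (suffix1 T (P ! Suc (i - 1)))"
    by (intro str_less_suffix_successor nth_P_mem cong_nth_P_Suc) simp_all
  then show "str_less (suffix1 T (nth1 P i)) (suffix1 T (nth1 P (i + 1)))"
    using i unfolding nth1_def by simp
qed (use length_P length_T distinct_P set_P in simp_all)

lemma cong_nth1_P: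
  assumes "i \<in> {1..n}"
  shows "[int (nth1 P i) = int (P ! 0) + (int i - 1) * int k] (mod int n)"
proof -
  have "[int (P ! (i - 1)) = int (P ! 0) + int (i - 1) * int k] (mod int n)"
    using assms by (intro cong_nth_P) auto
  then show ?thesis using assms unfolding nth1_def by (simp add: of_nat_diff)
qed

lemma nth1_P_rotate:
  assumes "t \<in> {1..n}" "nth1 P t = modn (int (nth1 P 1) - 1 - int k) n" "i \<in> {1..n}"
  shows "nth1 P (modn (int i + int t) n) = modn (int (nth1 P i) - 1) n"
proof -
  define p where "p = int (P ! 0)"
  define m where "m = modn (int i + int t) n"
  have m: "m \<in> {1..n}" unfolding m_def by (rule modn_bounds[OF n_pos])
  have "[p + (int t - 1) * int k = int (nth1 P t)] (mod int n)"
    unfolding p_def using cong_nth1_P[OF assms(1)] by (rule cong_sym)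
  also have "[int (nth1 P t) = p - 1 - int k] (mod int n)"
    using assms(2) cong_modn[OF n_pos, of "int (nth1 P 1) - 1 - int k"]
    unfolding p_def nth1_def by simp
  finally have t: "[p + (int t - 1) * int k = p - 1 - int k] (mod int n)" .
  have "[int (nth1 P m) = p + (int m - 1) * int k] (mod int n)"
    unfolding p_def using m by (rule cong_nth1_P)
  also have "[p + (int m - 1) * int k = p + (int i + int t - 1) * int k] (mod int n)"
    unfolding m_def by (intro cong_add cong_scalar_right cong_diff cong_refl cong_modn[OF n_pos])
  also have "p + (int i + int t - 1) * int k = (p + (int t - 1) * int k) + (int i - 1) * int k + int k"
    by (simp add: algebra_simps)
  also have "[\<dots> = (p - 1 - int k) + (int i - 1) * int k + int k] (mod int n)"
    using t by (intro cong_add cong_refl)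
  also have "(p - 1 - int k) + (int i - 1) * int k + int k = (p + (int i - 1) * int k) - 1"
    by simp
  also have "[\<dots> = int (nth1 P i) - 1] (mod int n)"
    unfolding p_def using cong_nth1_P[OF assms(3)] by (intro cong_diff cong_refl) (rule cong_sym)
  finally have "[int (nth1 P m) = int (nth1 P i) - 1] (mod int n)" .
  moreover have "nth1 P m \<in> {1..n}"
    using m unfolding nth1_def by (intro nth_P_mem) auto
  ultimately show ?thesis
    unfolding m_def[symmetric] by (simp add: modn_eqI)
qed

end

theorem lemma5:
  fixes n k t :: nat and P :: "nat list"
  assumes "n \<ge> 2"
    and "ap_perm n k P"
    and "P \<noteq> rev [1..<n+1]"
    and "t \<in> {1..n}"
    and "nth1 P t = modn (int (nth1 P 1) - 1 - int k) n"
  shows "\<forall>i \<in> {1..n}. bwt (tern_string n k P) i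
           = nth1 (tern_string n k P) (nth1 P (modn (int i + int t) n))"
proof
  \<comment> \<open>The excluded decreasing permutation is not special here: for it \<open>T = b\<dots>ba\<close>, with suffix array \<open>P\<close>.\<close>
  interpret ap_permutation n k P
    using assms(1,2) by unfold_locales
  fix i assume "i \<in> {1..n}"
  have "suffix_array T = P"
    by (rule suffix_array_eqI[OF is_suffix_array_T])
  then show "bwt (tern_string n k P) i = nth1 (tern_string n k P) (nth1 P (modn (int i + int t) n))"
    using nth1_P_rotate[OF assms(4,5) \<open>i \<in> {1..n}\<close>]
    unfolding bwt_def T_def[symmetric] length_T by simp
qed

end
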